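(* Let $\mathfrak{stl}_3(R)^\sharp$ be the Leibniz algebra over $K$ generated by symbols $X^\sharp_{ij}(a)$ ($a\in R$, $1\le i\ne j\le 3$) and the $K$-module $\mathcal U$, subject to: $X^\sharp_{ij}$ is $K$-linear in $a$; $[X^\sharp_{ij}(a),X^\sharp_{jk}(b)]=-[X^\sharp_{jk}(b),X^\sharp_{ij}(a)]=X^\sharp_{ik}(ab)$ for distinct $i,j,k$; $[X^\sharp_{ij}(a),\mathcal U]=0=[\mathcal U,X^\sharp_{ij}(a)]$; $[X^\sharp_{ij}(a),X^\sharp_{ij}(b)]=0$; $[X^\sharp_{ij}(a),X^\sharp_{ik}(b)]=\mathrm{sign}(j,k)(\overline{ab})^{(i)}$ and $[X^\sharp_{ij}(a),X^\sharp_{kj}(b)]=\mathrm{sign}(i,k)(\overline{ab})^{(-j)}$ for distinct $i,j,k$. Let $\widehat{\mathfrak{stl}}_3(R)=\mathcal U\oplus\mathfrak{stl}_3(R)$ with bracket $[(c,x),(c',y)]=(\psi(x,y),[x,y])$. Then the unique Leibniz algebra homomorphism $\rho:\mathfrak{stl}_3(R)^\sharp\to\widehat{\mathfrak{stl}}_3(R)$ with $\rho(X^\sharp_{ij}(a))=(0,X_{ij}(a))$ and $\rho(u)=(u,0)$ for $u\in\mathcal U$ is an isomorphism.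
   Context: $K$ unital commutative ring, $R$ unital associative $K$-algebra, free as $K$-module with basis containing $1$. Leibniz algebra: $K$-bilinear bracket with $[x,[y,z]]=[[x,y],z]-[[x,z],y]$. $\mathfrak{stl}_3(R)$: Leibniz algebra over $K$ generated by $X_{ij}(a)$, $a\in R$, $1\le i\ne j\le 3$, subject to $K$-linearity in $a$, $[X_{ij}(a),X_{jk}(b)]=X_{ik}(ab)$ and $[X_{ij}(a),X_{ki}(b)]=-X_{kj}(ba)$ for distinct $i,j,k$, $[X_{ij}(a),X_{kl}(b)]=0$ for $j\ne k$, $i\ne l$. $H$ is the $K$-span of all $[X_{ij}(a),X_{ji}(b)]$; $\mathfrak{stl}_3(R)=H\oplus\bigoplus_{i\ne j}X_{ij}(R)$ with $a\mapsto X_{ij}(a)$ injective. $R_3=R/(3R+R[R,R])$, $\bar a$ the class of $a$. $\mathcal U=R_3^6$ with coordinates indexed by $\{1,2,3,-1,-2,-3\}$; $\bar a^{(m)}$ is the element with coordinate $\bar a$ at index $m$, $0$ elsewhere. $\mathrm{sign}(m,n)=1$ if $m<n$, $-1$ if $m>n$. $\psi$ is the $K$-bilinear map with $\psi(X_{ij}(a),X_{ik}(b))=\mathrm{sign}(j,k)(\overline{ab})^{(i)}$, $\psi(X_{ij}(a),X_{kj}(b))=\mathrm{sign}(i,k)(\overline{ab})^{(-j)}$ for distinct $i,j,k$, $\psi=0$ on all other pairs $X_{ij}(a),X_{kl}(b)$ and whenever an argument lies in $H$; it is a Leibniz 2-cocycle. *)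

theory Defs
  imports Main "HOL.Modules" "HOL-Library.Function_Algebras" "HOL-Library.Product_Plus"
begin

definition leibniz ::
  "('k::comm_ring_1 \<Rightarrow> 'a::ab_group_add \<Rightarrow> 'a) \<Rightarrow> ('a \<Rightarrow> 'a \<Rightarrow> 'a) \<Rightarrow> bool" where
  "leibniz sc br \<longleftrightarrow> module sc
     \<and> (\<forall>x y z. br (x + y) z = br x z + br y z)
     \<and> (\<forall>x y z. br x (y + z) = br x y + br x z)
     \<and> (\<forall>c x y. br (sc c x) y = sc c (br x y))
     \<and> (\<forall>c x y. br x (sc c y) = sc c (br x y))
     \<and> (\<forall>x y z. br x (br y z) = br (br x y) z - br (br x z) y)"

definition leibniz_hom ::
  "('k::comm_ring_1 \<Rightarrow> 'a::ab_group_add \<Rightarrow> 'a) \<Rightarrow> ('a \<Rightarrow> 'a \<Rightarrow> 'a) \<Rightarrow>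
   ('k \<Rightarrow> 'b::ab_group_add \<Rightarrow> 'b) \<Rightarrow> ('b \<Rightarrow> 'b \<Rightarrow> 'b) \<Rightarrow> ('a \<Rightarrow> 'b) \<Rightarrow> bool" where
  "leibniz_hom sc br sc' br' f \<longleftrightarrow>
     (\<forall>x y. f (x + y) = f x + f y) \<and> (\<forall>c x. f (sc c x) = sc' c (f x))
     \<and> (\<forall>x y. f (br x y) = br' (f x) (f y))"

datatype ('g, 'k) lexpr =
    Gen 'g | Zero | Add "('g, 'k) lexpr" "('g, 'k) lexpr" | Neg "('g, 'k) lexpr"
  | Scl 'k "('g, 'k) lexpr" | Brk "('g, 'k) lexpr" "('g, 'k) lexpr"

primrec gens :: "('g, 'k) lexpr \<Rightarrow> 'g set" where
  "gens (Gen g) = {g}"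
| "gens Zero = {}"
| "gens (Add e f) = gens e \<union> gens f"
| "gens (Neg e) = gens e"
| "gens (Scl c e) = gens e"
| "gens (Brk e f) = gens e \<union> gens f"

primrec leval ::
  "('k \<Rightarrow> 'a::ab_group_add \<Rightarrow> 'a) \<Rightarrow> ('a \<Rightarrow> 'a \<Rightarrow> 'a) \<Rightarrow> ('g \<Rightarrow> 'a) \<Rightarrow> ('g, 'k) lexpr \<Rightarrow> 'a" where
  "leval sc br g (Gen x) = g x"
| "leval sc br g Zero = 0"
| "leval sc br g (Add e f) = leval sc br g e + leval sc br g f"
| "leval sc br g (Neg e) = - leval sc br g e"
| "leval sc br g (Scl c e) = sc c (leval sc br g e)"
| "leval sc br g (Brk e f) = br (leval sc br g e) (leval sc br g f)"

inductive lder :: "(('g, 'k::comm_ring_1) lexpr \<times> ('g, 'k) lexpr) set \<Rightarrow>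
                   ('g, 'k) lexpr \<Rightarrow> ('g, 'k) lexpr \<Rightarrow> bool"
  for E where
  rel: "(e, f) \<in> E \<Longrightarrow> lder E e f"
| refl: "lder E e e"
| sym: "lder E e f \<Longrightarrow> lder E f e"
| trans: "lder E e f \<Longrightarrow> lder E f h \<Longrightarrow> lder E e h"
| cong_add: "lder E e e' \<Longrightarrow> lder E f f' \<Longrightarrow> lder E (Add e f) (Add e' f')"
| cong_neg: "lder E e e' \<Longrightarrow> lder E (Neg e) (Neg e')"
| cong_scl: "lder E e e' \<Longrightarrow> lder E (Scl c e) (Scl c e')"
| cong_brk: "lder E e e' \<Longrightarrow> lder E f f' \<Longrightarrow> lder E (Brk e f) (Brk e' f')"
| add_assoc: "lder E (Add (Add e f) h) (Add e (Add f h))"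
| add_comm: "lder E (Add e f) (Add f e)"
| add_zero: "lder E (Add e Zero) e"
| add_neg: "lder E (Add e (Neg e)) Zero"
| scl_add: "lder E (Scl c (Add e f)) (Add (Scl c e) (Scl c f))"
| add_scl: "lder E (Scl (c + d) e) (Add (Scl c e) (Scl d e))"
| scl_scl: "lder E (Scl c (Scl d e)) (Scl (c * d) e)"
| scl_one: "lder E (Scl 1 e) e"
| brk_add_l: "lder E (Brk (Add e f) h) (Add (Brk e h) (Brk f h))"
| brk_add_r: "lder E (Brk e (Add f h)) (Add (Brk e f) (Brk e h))"
| brk_scl_l: "lder E (Brk (Scl c e) f) (Scl c (Brk e f))"
| brk_scl_r: "lder E (Brk e (Scl c f)) (Scl c (Brk e f))"
| leibniz_id: "lder E (Brk e (Brk f h)) (Add (Brk (Brk e f) h) (Neg (Brk (Brk e h) f)))"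

text \<open>This is exactly
the statement that the canonical map from the free Leibniz algebra on G modulo the
ideal generated by E is an isomorphism.\<close>

definition presents ::
  "('k::comm_ring_1 \<Rightarrow> 'a::ab_group_add \<Rightarrow> 'a) \<Rightarrow> ('a \<Rightarrow> 'a \<Rightarrow> 'a) \<Rightarrow> ('g \<Rightarrow> 'a) \<Rightarrow> 'g set \<Rightarrow>
   (('g, 'k) lexpr \<times> ('g, 'k) lexpr) set \<Rightarrow> bool" where
  "presents sc br g G E \<longleftrightarrow> leibniz sc br
     \<and> (\<forall>x. \<exists>e. gens e \<subseteq> G \<and> leval sc br g e = x)
     \<and> (\<forall>e f. gens e \<subseteq> G \<longrightarrow> gens f \<subseteq> G \<longrightarrow>
            (leval sc br g e = leval sc br g f \<longleftrightarrow> lder E e f))"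

definition ind3 :: "nat set" where "ind3 = {1, 2, 3}"

definition sign :: "nat \<Rightarrow> nat \<Rightarrow> 'a::ab_group_add \<Rightarrow> 'a" where
  "sign m n u = (if m < n then u else - u)"

text \<open>Index set {1,2,3,-1,-2,-3} of the coordinates of U = R_3^6.\<close>
datatype uidx = P1 | P2 | P3 | M1 | M2 | M3

definition upos :: "nat \<Rightarrow> uidx" where
  "upos i = (if i = 1 then P1 else if i = 2 then P2 else P3)"
definition uneg :: "nat \<Rightarrow> uidx" where
  "uneg i = (if i = 1 then M1 else if i = 2 then M2 else M3)"

definition uvec :: "uidx \<Rightarrow> 'q::zero \<Rightarrow> (uidx \<Rightarrow> 'q)" where
  "uvec m q = (\<lambda>n. if n = m then q else 0)"

definition uscale :: "('k \<Rightarrow> 'q \<Rightarrow> 'q) \<Rightarrow> 'k \<Rightarrow> (uidx \<Rightarrow> 'q) \<Rightarrow> (uidx \<Rightarrow> 'q)" where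
  "uscale scq c u = (\<lambda>m. scq c (u m))"

definition I3 :: "('k::comm_ring_1 \<Rightarrow> 'r::ring_1 \<Rightarrow> 'r) \<Rightarrow> 'r set" where
  "I3 scr = module.span scr ({3 * a | a. True} \<union> {r * (x * y - y * x) | r x y. True})"

definition stl_gens :: "(nat \<times> nat \<times> 'r) set" where
  "stl_gens = {(i, j, a). i \<in> ind3 \<and> j \<in> ind3 \<and> i \<noteq> j}"

definition stl_rels :: "('k::comm_ring_1 \<Rightarrow> 'r::ring_1 \<Rightarrow> 'r) \<Rightarrow>
     ((nat \<times> nat \<times> 'r, 'k) lexpr \<times> (nat \<times> nat \<times> 'r, 'k) lexpr) set" where
  "stl_rels scr =
     {(Gen (i, j, a + b), Add (Gen (i, j, a)) (Gen (i, j, b))) | i j a b.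
         i \<in> ind3 \<and> j \<in> ind3 \<and> i \<noteq> j}
   \<union> {(Gen (i, j, scr c a), Scl c (Gen (i, j, a))) | i j c a.
         i \<in> ind3 \<and> j \<in> ind3 \<and> i \<noteq> j}
   \<union> {(Brk (Gen (i, j, a)) (Gen (j, k, b)), Gen (i, k, a * b)) | i j k a b.
         i \<in> ind3 \<and> j \<in> ind3 \<and> k \<in> ind3 \<and> i \<noteq> j \<and> j \<noteq> k \<and> i \<noteq> k}
   \<union> {(Brk (Gen (i, j, a)) (Gen (k, i, b)), Neg (Gen (k, j, b * a))) | i j k a b.
         i \<in> ind3 \<and> j \<in> ind3 \<and> k \<in> ind3 \<and> i \<noteq> j \<and> j \<noteq> k \<and> i \<noteq> k}
   \<union> {(Brk (Gen (i, j, a)) (Gen (k, l, b)), Zero) | i j k l a b.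
         i \<in> ind3 \<and> j \<in> ind3 \<and> k \<in> ind3 \<and> l \<in> ind3 \<and> i \<noteq> j \<and> k \<noteq> l
         \<and> j \<noteq> k \<and> i \<noteq> l}"

datatype ('r, 'u) sgen = SX nat nat 'r | SU 'u

definition sharp_gens :: "('r, 'u) sgen set" where
  "sharp_gens = {SX i j a | i j a. i \<in> ind3 \<and> j \<in> ind3 \<and> i \<noteq> j} \<union> range SU"

definition sharp_rels ::
  "('k::comm_ring_1 \<Rightarrow> 'r::ring_1 \<Rightarrow> 'r) \<Rightarrow> ('k \<Rightarrow> 'q::ab_group_add \<Rightarrow> 'q) \<Rightarrow> ('r \<Rightarrow> 'q) \<Rightarrow>
   ((('r, uidx \<Rightarrow> 'q) sgen, 'k) lexpr \<times> (('r, uidx \<Rightarrow> 'q) sgen, 'k) lexpr) set" where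
  "sharp_rels scr scq bar =
     {(Gen (SX i j (a + b)), Add (Gen (SX i j a)) (Gen (SX i j b))) | i j a b.
         i \<in> ind3 \<and> j \<in> ind3 \<and> i \<noteq> j}
   \<union> {(Gen (SX i j (scr c a)), Scl c (Gen (SX i j a))) | i j c a.
         i \<in> ind3 \<and> j \<in> ind3 \<and> i \<noteq> j}
   \<union> {(Gen (SU (u + v)), Add (Gen (SU u)) (Gen (SU v))) | u v. True}
   \<union> {(Gen (SU (uscale scq c u)), Scl c (Gen (SU u))) | c u. True}
   \<union> {(Brk (Gen (SX i j a)) (Gen (SX j k b)), Gen (SX i k (a * b))) | i j k a b.
         i \<in> ind3 \<and> j \<in> ind3 \<and> k \<in> ind3 \<and> i \<noteq> j \<and> j \<noteq> k \<and> i \<noteq> k}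
   \<union> {(Brk (Gen (SX j k b)) (Gen (SX i j a)), Neg (Gen (SX i k (a * b)))) | i j k a b.
         i \<in> ind3 \<and> j \<in> ind3 \<and> k \<in> ind3 \<and> i \<noteq> j \<and> j \<noteq> k \<and> i \<noteq> k}
   \<union> {(Brk (Gen (SX i j a)) (Gen (SU u)), Zero) | i j a u.
         i \<in> ind3 \<and> j \<in> ind3 \<and> i \<noteq> j}
   \<union> {(Brk (Gen (SU u)) (Gen (SX i j a)), Zero) | i j a u.
         i \<in> ind3 \<and> j \<in> ind3 \<and> i \<noteq> j}
   \<union> {(Brk (Gen (SX i j a)) (Gen (SX i j b)), Zero) | i j a b.
         i \<in> ind3 \<and> j \<in> ind3 \<and> i \<noteq> j}
   \<union> {(Brk (Gen (SX i j a)) (Gen (SX i k b)), Gen (SU (sign j k (uvec (upos i) (bar (a * b))))))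
         | i j k a b. i \<in> ind3 \<and> j \<in> ind3 \<and> k \<in> ind3 \<and> i \<noteq> j \<and> j \<noteq> k \<and> i \<noteq> k}
   \<union> {(Brk (Gen (SX i j a)) (Gen (SX k j b)), Gen (SU (sign i k (uvec (uneg j) (bar (a * b))))))
         | i j k a b. i \<in> ind3 \<and> j \<in> ind3 \<and> k \<in> ind3 \<and> i \<noteq> j \<and> j \<noteq> k \<and> i \<noteq> k}"

definition hat_sc :: "('k \<Rightarrow> 'q \<Rightarrow> 'q) \<Rightarrow> ('k \<Rightarrow> 'l \<Rightarrow> 'l) \<Rightarrow>
    'k \<Rightarrow> (uidx \<Rightarrow> 'q) \<times> 'l \<Rightarrow> (uidx \<Rightarrow> 'q) \<times> 'l" where
  "hat_sc scq scl c p = (uscale scq c (fst p), scl c (snd p))"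

definition hat_br :: "('l \<Rightarrow> 'l \<Rightarrow> uidx \<Rightarrow> 'q) \<Rightarrow> ('l \<Rightarrow> 'l \<Rightarrow> 'l) \<Rightarrow>
    (uidx \<Rightarrow> 'q) \<times> 'l \<Rightarrow> (uidx \<Rightarrow> 'q) \<times> 'l \<Rightarrow> (uidx \<Rightarrow> 'q) \<times> 'l" where
  "hat_br psi brl p p' = (psi (snd p) (snd p'), brl (snd p) (snd p'))"

end

theory Submission
  imports Defs
begin

(* The images sU u of U in stl_3(R)^sharp are central. Indeed, by the row and column relations
   and surjectivity of bar, every coordinate vector of U is a bracket of two generators X^sharp,
   and by the Leibniz identity whatever brackets all X^sharp to zero from the left also brackets
   such a bracket to zero; an induction over generators does the rest. Hence the relations of
   stl_3(R), evaluated at the X^sharp, hold modulo the central submodule range sU, and so does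
   the congruence they generate; moreover every element of stl_3(R)^sharp is such an evaluation
   plus an element of range sU.

   Since psi is a bilinear cocycle, U (+) stl_3(R) is a Leibniz algebra, and it satisfies the
   defining relations of stl_3(R)^sharp, so the presentation yields a unique rho. On evaluations,
   the stl_3(R)-component of rho is the evaluation in stl_3(R). So an element of the kernel is,
   up to range sU, the evaluation of an expression vanishing in stl_3(R), hence lies in range sU,
   on which rho is injective. Surjectivity holds because the U-component can be adjusted freely. *)

section \<open>Leibniz algebras and their presentations\<close>

locale leibniz_algebra = module sc
  for sc :: "'k::comm_ring_1 \<Rightarrow> 'a::ab_group_add \<Rightarrow> 'a" +
  fixes br :: "'a \<Rightarrow> 'a \<Rightarrow> 'a"
  assumes bracket_add_left: "br (x + y) z = br x z + br y z"
    and bracket_add_right: "br x (y + z) = br x y + br x z"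
    and bracket_scale_left: "br (sc c x) y = sc c (br x y)"
    and bracket_scale_right: "br x (sc c y) = sc c (br x y)"
    and leibniz_identity: "br x (br y z) = br (br x y) z - br (br x z) y"

lemma leibniz_iff_leibniz_algebra: "leibniz sc br \<longleftrightarrow> leibniz_algebra sc br"
  by (auto simp: leibniz_def leibniz_algebra_def leibniz_algebra_axioms_def)

context leibniz_algebra
begin

lemma bracket_zero_left [simp]: "br 0 y = 0"
  and bracket_zero_right [simp]: "br x 0 = 0"
  and bracket_minus_left: "br (- x) y = - br x y"
  and bracket_minus_right: "br x (- y) = - br x y"
  and bracket_diff_left: "br (x - x') y = br x y - br x' y"
  and bracket_diff_right: "br x (y - y') = br x y - br x y'"
proof -
  have left: "additive (\<lambda>x. br x y)" for y
    by unfold_locales (rule bracket_add_left)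
  have right: "additive (br x)" for x
    by unfold_locales (rule bracket_add_right)
  show "br 0 y = 0" "br (- x) y = - br x y" "br (x - x') y = br x y - br x' y"
    using additive.zero[OF left] additive.minus[OF left] additive.diff[OF left] by simp_all
  show "br x 0 = 0" "br x (- y) = - br x y" "br x (y - y') = br x y - br x y'"
    using additive.zero[OF right] additive.minus[OF right] additive.diff[OF right] by simp_all
qed

lemma lder_leval_diff_mem:
  assumes W: "subspace W"
    and central: "\<And>w x. w \<in> W \<Longrightarrow> br x w = 0 \<and> br w x = 0"
    and rels: "\<And>e f. (e, f) \<in> E \<Longrightarrow> leval sc br g e - leval sc br g f \<in> W"
    and "lder E e f"
  shows "leval sc br g e - leval sc br g f \<in> W"
  using \<open>lder E e f\<close>
proof induction
  case (rel e f)
  then show ?case by (rule rels)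
next
  case (sym e f)
  then show ?case using subspace_neg[OF W sym(2)] by simp
next
  case (trans e f h)
  then show ?case using subspace_add[OF W trans(3,4)] by simp
next
  case (cong_add e e' f f')
  then show ?case using subspace_add[OF W cong_add(3,4)] by (simp add: algebra_simps)
next
  case (cong_neg e e')
  then show ?case using subspace_neg[OF W cong_neg(2)] by (simp add: algebra_simps)
next
  case (cong_scl e e' c)
  then show ?case using subspace_scale[OF W cong_scl(2), of c] by (simp add: scale_right_diff_distrib)
next
  case (cong_brk e e' f f')
  let ?v = "leval sc br g"
  have "?v (Brk e f) - ?v (Brk e' f') = br (?v e - ?v e') (?v f) + br (?v e') (?v f - ?v f')"
    by (simp add: bracket_diff_left bracket_diff_right)
  also have "\<dots> = 0"
    using central[OF cong_brk(3)] central[OF cong_brk(4)] by simp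
  finally show ?case using subspace_0[OF W] by simp
qed (simp_all add: subspace_0[OF W] algebra_simps scale_right_distrib scale_left_distrib
    bracket_add_left bracket_add_right bracket_scale_left bracket_scale_right leibniz_identity)

lemma lder_leval_eq:
  assumes "\<And>e f. (e, f) \<in> E \<Longrightarrow> leval sc br g e = leval sc br g f" and "lder E e f"
  shows "leval sc br g e = leval sc br g f"
  using lder_leval_diff_mem[of "{0}" E g e f] assms by simp

end

lemma leibniz_hom_module_hom:
  assumes "leibniz_algebra sc br" "leibniz_algebra sc' br'" "leibniz_hom sc br sc' br' f"
  shows "module_hom sc sc' f"
  using assms by (simp add: module_hom_def module_hom_axioms_def leibniz_algebra_def leibniz_hom_def)

locale presentation = leibniz_algebra sc br
  for sc :: "'k::comm_ring_1 \<Rightarrow> 'a::ab_group_add \<Rightarrow> 'a" and br +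
  fixes g :: "'g \<Rightarrow> 'a" and G :: "'g set" and E :: "(('g, 'k) lexpr \<times> ('g, 'k) lexpr) set"
  assumes generated: "\<exists>e. gens e \<subseteq> G \<and> leval sc br g e = x"
    and leval_eq_iff_lder:
      "gens e \<subseteq> G \<Longrightarrow> gens f \<subseteq> G \<Longrightarrow> leval sc br g e = leval sc br g f \<longleftrightarrow> lder E e f"

lemma presents_iff_presentation: "presents sc br g G E \<longleftrightarrow> presentation sc br g G E"
  by (auto simp: presents_def presentation_def presentation_axioms_def leibniz_iff_leibniz_algebra)

context presentation
begin

lemma relation_holds:
  "(e, f) \<in> E \<Longrightarrow> gens e \<subseteq> G \<Longrightarrow> gens f \<subseteq> G \<Longrightarrow> leval sc br g e = leval sc br g f"
  using leval_eq_iff_lder lder.rel by blast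

lemma generated_induct [case_names generator zero add uminus scale bracket]:
  assumes "\<And>x. x \<in> G \<Longrightarrow> P (g x)" and "P 0"
    and "\<And>x y. P x \<Longrightarrow> P y \<Longrightarrow> P (x + y)" and "\<And>x. P x \<Longrightarrow> P (- x)"
    and "\<And>c x. P x \<Longrightarrow> P (sc c x)" and "\<And>x y. P x \<Longrightarrow> P y \<Longrightarrow> P (br x y)"
  shows "P s"
proof -
  obtain e where "gens e \<subseteq> G" "leval sc br g e = s"
    using generated by blast
  moreover have "gens e \<subseteq> G \<Longrightarrow> P (leval sc br g e)"
    by (induction e) (simp_all add: assms)
  ultimately show ?thesis by blast
qed

lemma hom_eqI:
  assumes B: "leibniz_algebra sc' br'"
    and \<phi>: "leibniz_hom sc br sc' br' \<phi>" and \<psi>: "leibniz_hom sc br sc' br' \<psi>"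
    and gen: "\<And>x. x \<in> G \<Longrightarrow> \<phi> (g x) = \<psi> (g x)"
  shows "\<phi> = \<psi>"
proof
  interpret \<phi>: module_hom sc sc' \<phi>
    by (rule leibniz_hom_module_hom[OF leibniz_algebra_axioms B \<phi>])
  interpret \<psi>: module_hom sc sc' \<psi>
    by (rule leibniz_hom_module_hom[OF leibniz_algebra_axioms B \<psi>])
  show "\<phi> s = \<psi> s" for s
    by (induction s rule: generated_induct)
      (use gen \<phi> \<psi> in \<open>simp_all add: leibniz_hom_def \<phi>.neg \<psi>.neg\<close>)
qed

lemma hom_lift:
  fixes sc' :: "'k \<Rightarrow> 'b::ab_group_add \<Rightarrow> 'b" and br' h
  assumes B: "leibniz_algebra sc' br'"
    and rels: "\<And>e f. (e, f) \<in> E \<Longrightarrow> leval sc' br' h e = leval sc' br' h f"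
  shows "\<exists>\<phi>. leibniz_hom sc br sc' br' \<phi> \<and> (\<forall>x\<in>G. \<phi> (g x) = h x)"
proof -
  define \<phi> where "\<phi> s = leval sc' br' h (SOME e. gens e \<subseteq> G \<and> leval sc br g e = s)" for s
  have \<phi>_leval: "\<phi> (leval sc br g e) = leval sc' br' h e" if "gens e \<subseteq> G" for e
  proof -
    let ?e = "SOME e'. gens e' \<subseteq> G \<and> leval sc br g e' = leval sc br g e"
    have "gens ?e \<subseteq> G \<and> leval sc br g ?e = leval sc br g e"
      by (rule someI) (use that in blast)
    then have "lder E ?e e"
      using leval_eq_iff_lder that by blast
    then show ?thesis
      unfolding \<phi>_def using leibniz_algebra.lder_leval_eq[OF B rels] by blast
  qed
  have "leibniz_hom sc br sc' br' \<phi>"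
    unfolding leibniz_hom_def
  proof (intro conjI allI)
    fix c x y
    obtain ex ey where "gens ex \<subseteq> G" "leval sc br g ex = x" "gens ey \<subseteq> G" "leval sc br g ey = y"
      using generated by meson
    then show "\<phi> (x + y) = \<phi> x + \<phi> y" "\<phi> (sc c x) = sc' c (\<phi> x)" "\<phi> (br x y) = br' (\<phi> x) (\<phi> y)"
      using \<phi>_leval[of "Add ex ey"] \<phi>_leval[of "Scl c ex"] \<phi>_leval[of "Brk ex ey"] \<phi>_leval
      by auto
  qed
  moreover have "\<phi> (g x) = h x" if "x \<in> G" for x
    using \<phi>_leval[of "Gen x"] that by simp
  ultimately show ?thesis by blast
qed

end

section \<open>The algebra stl_3(R)^sharp\<close>

lemma ind3_cases: "i \<in> ind3 \<Longrightarrow> i = 1 \<or> i = 2 \<or> i = (3::nat)"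
  by (simp add: ind3_def)

lemma uvec_decomp:
  fixes v :: "uidx \<Rightarrow> 'q::monoid_add"
  shows "v = uvec P1 (v P1) + (uvec P2 (v P2) + (uvec P3 (v P3) + (uvec M1 (v M1)
     + (uvec M2 (v M2) + uvec M3 (v M3)))))"
  by (rule ext, case_tac x) (simp_all add: uvec_def plus_fun_def)

locale stl3_sharp =
  S: presentation scS brS gS sharp_gens "sharp_rels scR scQ bar"
  for scR :: "'k::comm_ring_1 \<Rightarrow> 'r::ring_1 \<Rightarrow> 'r"
    and scQ :: "'k \<Rightarrow> 'q::ab_group_add \<Rightarrow> 'q"
    and bar :: "'r \<Rightarrow> 'q"
    and scS :: "'k \<Rightarrow> 's::ab_group_add \<Rightarrow> 's"
    and brS :: "'s \<Rightarrow> 's \<Rightarrow> 's"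
    and gS :: "('r, uidx \<Rightarrow> 'q) sgen \<Rightarrow> 's" +
  assumes bar_surj: "surj bar"
begin

abbreviation sX :: "nat \<Rightarrow> nat \<Rightarrow> 'r \<Rightarrow> 's" where "sX i j a \<equiv> gS (SX i j a)"
abbreviation sU :: "(uidx \<Rightarrow> 'q) \<Rightarrow> 's" where "sU u \<equiv> gS (SU u)"

lemma sX_add: "(i, j, a) \<in> stl_gens \<Longrightarrow> sX i j (a + b) = sX i j a + sX i j b"
  using S.relation_holds[of "Gen (SX i j (a + b))" "Add (Gen (SX i j a)) (Gen (SX i j b))"]
  by (simp add: stl_gens_def sharp_gens_def) (simp add: sharp_rels_def)

lemma sX_scale: "(i, j, a) \<in> stl_gens \<Longrightarrow> sX i j (scR c a) = scS c (sX i j a)"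
  using S.relation_holds[of "Gen (SX i j (scR c a))" "Scl c (Gen (SX i j a))"]
  by (simp add: stl_gens_def sharp_gens_def) (simp add: sharp_rels_def)

lemma sU_add: "sU (u + v) = sU u + sU v"
  using S.relation_holds[of "Gen (SU (u + v))" "Add (Gen (SU u)) (Gen (SU v))"]
  by (simp add: sharp_gens_def) (simp add: sharp_rels_def)

lemma sU_scale: "sU (uscale scQ c u) = scS c (sU u)"
  using S.relation_holds[of "Gen (SU (uscale scQ c u))" "Scl c (Gen (SU u))"]
  by (simp add: sharp_gens_def) (simp add: sharp_rels_def)

lemma sU_zero: "sU 0 = 0"
  using sU_add[of 0 0] by simp

lemma sX_bracket_chain:
  "i \<in> ind3 \<Longrightarrow> j \<in> ind3 \<Longrightarrow> k \<in> ind3 \<Longrightarrow> i \<noteq> j \<Longrightarrow> j \<noteq> k \<Longrightarrow> i \<noteq> k \<Longrightarrow>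
   brS (sX i j a) (sX j k b) = sX i k (a * b)"
  using S.relation_holds[of "Brk (Gen (SX i j a)) (Gen (SX j k b))" "Gen (SX i k (a * b))"]
  by (simp add: sharp_gens_def) (simp add: sharp_rels_def)

lemma sX_bracket_chain_rev:
  "i \<in> ind3 \<Longrightarrow> j \<in> ind3 \<Longrightarrow> k \<in> ind3 \<Longrightarrow> i \<noteq> j \<Longrightarrow> j \<noteq> k \<Longrightarrow> i \<noteq> k \<Longrightarrow>
   brS (sX j k b) (sX i j a) = - sX i k (a * b)"
  using S.relation_holds[of "Brk (Gen (SX j k b)) (Gen (SX i j a))" "Neg (Gen (SX i k (a * b)))"]
  by (simp add: sharp_gens_def) (simp add: sharp_rels_def)

lemma sX_bracket_sU: "(i, j, a) \<in> stl_gens \<Longrightarrow> brS (sX i j a) (sU u) = 0"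
  using S.relation_holds[of "Brk (Gen (SX i j a)) (Gen (SU u))" Zero]
  by (simp add: stl_gens_def sharp_gens_def) (simp add: sharp_rels_def)

lemma sU_bracket_sX: "(i, j, a) \<in> stl_gens \<Longrightarrow> brS (sU u) (sX i j a) = 0"
  using S.relation_holds[of "Brk (Gen (SU u)) (Gen (SX i j a))" Zero]
  by (simp add: stl_gens_def sharp_gens_def) (simp add: sharp_rels_def)

lemma sX_bracket_same: "(i, j, a) \<in> stl_gens \<Longrightarrow> brS (sX i j a) (sX i j b) = 0"
  using S.relation_holds[of "Brk (Gen (SX i j a)) (Gen (SX i j b))" Zero]
  by (simp add: stl_gens_def sharp_gens_def) (simp add: sharp_rels_def)

lemma sX_bracket_row:
  "i \<in> ind3 \<Longrightarrow> j \<in> ind3 \<Longrightarrow> k \<in> ind3 \<Longrightarrow> i \<noteq> j \<Longrightarrow> j \<noteq> k \<Longrightarrow> i \<noteq> k \<Longrightarrow>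
   brS (sX i j a) (sX i k b) = sU (sign j k (uvec (upos i) (bar (a * b))))"
  using S.relation_holds[of "Brk (Gen (SX i j a)) (Gen (SX i k b))"
      "Gen (SU (sign j k (uvec (upos i) (bar (a * b)))))"]
  by (simp add: sharp_gens_def) (simp add: sharp_rels_def)

lemma sX_bracket_col:
  "i \<in> ind3 \<Longrightarrow> j \<in> ind3 \<Longrightarrow> k \<in> ind3 \<Longrightarrow> i \<noteq> j \<Longrightarrow> j \<noteq> k \<Longrightarrow> i \<noteq> k \<Longrightarrow>
   brS (sX i j a) (sX k j b) = sU (sign i k (uvec (uneg j) (bar (a * b))))"
  using S.relation_holds[of "Brk (Gen (SX i j a)) (Gen (SX k j b))"
      "Gen (SU (sign i k (uvec (uneg j) (bar (a * b)))))"]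
  by (simp add: sharp_gens_def) (simp add: sharp_rels_def)

lemma bracket_sU_eq_0:
  assumes z: "\<And>i j a. (i, j, a) \<in> stl_gens \<Longrightarrow> brS z (sX i j a) = 0"
  shows "brS z (sU v) = 0"
proof -
  have bracket_gens: "brS z (brS (sX i j a) (sX k l b)) = 0"
    if "(i, j, a) \<in> stl_gens" "(k, l, b) \<in> stl_gens" for i j a k l b
    using z[OF that(1)] z[OF that(2)] by (simp add: S.leibniz_identity)
  have uvec: "brS z (sU (uvec m q)) = 0" for m q
  proof -
    obtain r where q: "q = bar (r * 1)"
      using bar_surj by (metis mult_1_right surjD)
    note defs = stl_gens_def ind3_def sign_def upos_def uneg_def
    show ?thesis
    proof (cases m)
      case P1
      then show ?thesis
        using sX_bracket_row[of 1 2 3 r 1] bracket_gens[of 1 2 r 1 3 1] q by (simp add: defs)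
    next
      case P2
      then show ?thesis
        using sX_bracket_row[of 2 1 3 r 1] bracket_gens[of 2 1 r 2 3 1] q by (simp add: defs)
    next
      case P3
      then show ?thesis
        using sX_bracket_row[of 3 1 2 r 1] bracket_gens[of 3 1 r 3 2 1] q by (simp add: defs)
    next
      case M1
      then show ?thesis
        using sX_bracket_col[of 2 1 3 r 1] bracket_gens[of 2 1 r 3 1 1] q by (simp add: defs)
    next
      case M2
      then show ?thesis
        using sX_bracket_col[of 1 2 3 r 1] bracket_gens[of 1 2 r 3 2 1] q by (simp add: defs)
    next
      case M3
      then show ?thesis
        using sX_bracket_col[of 1 3 2 r 1] bracket_gens[of 1 3 r 2 3 1] q by (simp add: defs)
    qed
  qed
  show ?thesis
    by (subst uvec_decomp) (simp add: sU_add S.bracket_add_right uvec)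
qed

lemma sU_bracket_sU: "brS (sU u) (sU v) = 0"
  by (rule bracket_sU_eq_0) (rule sU_bracket_sX)

lemma sU_bracket_left: "brS (sU u) s = 0"
proof (induction s rule: S.generated_induct)
  case (generator x)
  then show ?case
    by (cases x) (auto simp: sharp_gens_def stl_gens_def sU_bracket_sX sU_bracket_sU)
qed (simp_all add: S.bracket_add_right S.bracket_minus_right S.bracket_scale_right
    S.leibniz_identity)

lemma sU_bracket_right: "brS s (sU u) = 0"
proof (induction s rule: S.generated_induct)
  case (generator x)
  then show ?case
    by (cases x) (auto simp: sharp_gens_def stl_gens_def sX_bracket_sU sU_bracket_sU)
next
  case (bracket x y)
  then show ?case
    using S.leibniz_identity[of x y "sU u"] by simp
qed (simp_all add: S.bracket_add_left S.bracket_minus_left S.bracket_scale_left)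

lemma subspace_range_sU: "S.subspace (range sU)"
proof (rule S.subspaceI)
  show "0 \<in> range sU"
    using sU_zero by (metis rangeI)
qed (auto simp: sU_add[symmetric] sU_scale[symmetric])

definition sharp_eval :: "(nat \<times> nat \<times> 'r, 'k) lexpr \<Rightarrow> 's" where
  "sharp_eval = leval scS brS (\<lambda>(i, j, a). sX i j a)"

lemma sharp_eval_stl_relation:
  assumes "(e, f) \<in> stl_rels scR"
  shows "sharp_eval e - sharp_eval f \<in> range sU"
proof -
  have zero: "0 \<in> range sU" and sU: "sU u \<in> range sU" for u
    using S.subspace_0[OF subspace_range_sU] by simp_all
  from assms show ?thesis
    unfolding stl_rels_def
  proof (elim UnE CollectE exE conjE)
    fix i j k l a b
    assume rel: "(e, f) = (Brk (Gen (i, j, a)) (Gen (k, l, b)), Zero)"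
      and ind: "i \<in> ind3" "j \<in> ind3" "k \<in> ind3" "l \<in> ind3"
      and ne: "i \<noteq> j" "k \<noteq> l" "j \<noteq> k" "i \<noteq> l"
    have "i = k \<or> j = l"
      using ind ne ind3_cases by metis
    then consider "i = k" "j = l" | "i = k" "j \<noteq> l" | "i \<noteq> k" "j = l"
      by blast
    then show ?thesis
    proof cases
      case 1
      then show ?thesis
        using rel ind ne sX_bracket_same zero by (simp add: sharp_eval_def stl_gens_def)
    next
      case 2
      then show ?thesis using rel ind ne sX_bracket_row sU by (simp add: sharp_eval_def)
    next
      case 3
      then show ?thesis using rel ind ne sX_bracket_col sU by (simp add: sharp_eval_def)
    qed
  qed (auto simp: sharp_eval_def stl_gens_def zero sX_add sX_scale sX_bracket_chain
      sX_bracket_chain_rev)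
qed

lemma sharp_eval_lder:
  "lder (stl_rels scR) e f \<Longrightarrow> sharp_eval e - sharp_eval f \<in> range sU"
  unfolding sharp_eval_def
  by (rule S.lder_leval_diff_mem[OF subspace_range_sU])
    (auto simp: sU_bracket_left sU_bracket_right sharp_eval_stl_relation[unfolded sharp_eval_def])

lemma sharp_eval_onto_mod_sU: "\<exists>e. gens e \<subseteq> stl_gens \<and> s - sharp_eval e \<in> range sU"
proof (induction s rule: S.generated_induct)
  case (generator x)
  show ?case
  proof (cases x)
    case (SX i j a)
    with generator have "gens (Gen (i, j, a)) \<subseteq> stl_gens"
      by (auto simp: sharp_gens_def stl_gens_def)
    then show ?thesis
      using S.subspace_0[OF subspace_range_sU]
      by (intro exI[of _ "Gen (i, j, a)"]) (simp add: SX sharp_eval_def)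
  next
    case (SU u)
    then show ?thesis
      by (intro exI[of _ Zero]) (simp add: sharp_eval_def)
  qed
next
  case zero
  show ?case
    using S.subspace_0[OF subspace_range_sU] by (intro exI[of _ Zero]) (simp add: sharp_eval_def)
next
  case (add x y)
  then obtain e f where e: "gens e \<subseteq> stl_gens" "x - sharp_eval e \<in> range sU"
    and f: "gens f \<subseteq> stl_gens" "y - sharp_eval f \<in> range sU" by blast
  have "x + y - sharp_eval (Add e f) = (x - sharp_eval e) + (y - sharp_eval f)"
    by (simp add: sharp_eval_def algebra_simps)
  also have "\<dots> \<in> range sU"
    by (rule S.subspace_add[OF subspace_range_sU e(2) f(2)])
  finally show ?case
    using e(1) f(1) by (intro exI[of _ "Add e f"]) simp
next
  case (uminus x)
  then obtain e where "gens e \<subseteq> stl_gens" "x - sharp_eval e \<in> range sU" by blast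
  then show ?case
    using S.subspace_neg[OF subspace_range_sU, of "x - sharp_eval e"]
    by (intro exI[of _ "Neg e"]) (simp add: sharp_eval_def)
next
  case (scale c x)
  then obtain e where "gens e \<subseteq> stl_gens" "x - sharp_eval e \<in> range sU" by blast
  then show ?case
    using S.subspace_scale[OF subspace_range_sU, of "x - sharp_eval e" c]
    by (intro exI[of _ "Scl c e"]) (simp add: sharp_eval_def S.scale_right_diff_distrib)
next
  case (bracket x y)
  then obtain e f u v where e: "gens e \<subseteq> stl_gens" "x - sharp_eval e = sU u"
    and f: "gens f \<subseteq> stl_gens" "y - sharp_eval f = sU v"
    by blast
  then have "x = sU u + sharp_eval e" "y = sU v + sharp_eval f"
    by (simp_all add: e(2)[symmetric] f(2)[symmetric])
  then have "brS x y - sharp_eval (Brk e f) = 0"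
    by (simp add: sharp_eval_def S.bracket_add_left S.bracket_add_right sU_bracket_left
        sU_bracket_right)
  then show ?case
    using e(1) f(1) S.subspace_0[OF subspace_range_sU] by (intro exI[of _ "Brk e f"]) simp
qed

end

section \<open>The central extension U (+) stl_3(R)\<close>

lemma module_uscale: "module scq \<Longrightarrow> module (uscale scq)"
  by unfold_locales (simp_all add: uscale_def fun_eq_iff module.scale_right_distrib
      module.scale_left_distrib module.scale_scale module.scale_one)

lemma module_hat_sc:
  assumes "module scq" and "module scl"
  shows "module (hat_sc scq scl)"
proof -
  interpret U: module "uscale scq" by (rule module_uscale[OF assms(1)])
  interpret L: module scl by (rule assms(2))
  show ?thesis
    by unfold_locales (simp_all add: hat_sc_def prod_eq_iff U.scale_right_distrib
        U.scale_left_distrib L.scale_right_distrib L.scale_left_distrib)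
qed

lemma leibniz_algebra_hat:
  assumes "module scq" and L: "leibniz_algebra scl brl"
    and "\<And>x y z. psi (x + y) z = psi x z + psi y z"
    and "\<And>x y z. psi x (y + z) = psi x y + psi x z"
    and "\<And>c x y. psi (scl c x) y = uscale scq c (psi x y)"
    and "\<And>c x y. psi x (scl c y) = uscale scq c (psi x y)"
    and "\<And>x y z. psi x (brl y z) = psi (brl x y) z - psi (brl x z) y"
  shows "leibniz_algebra (hat_sc scq scl) (hat_br psi brl)"
proof -
  interpret L: leibniz_algebra scl brl by (rule L)
  show ?thesis
    unfolding leibniz_algebra_def leibniz_algebra_axioms_def
    using module_hat_sc[OF \<open>module scq\<close> L.module_axioms]
    by (simp add: hat_br_def hat_sc_def assms
        L.bracket_add_left L.bracket_add_right L.bracket_scale_left L.bracket_scale_right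
        L.leibniz_identity)
qed

locale stl3_hat =
  L: presentation scL brL "\<lambda>(i, j, a). X i j a" stl_gens "stl_rels scR"
  for scR :: "'k::comm_ring_1 \<Rightarrow> 'r::ring_1 \<Rightarrow> 'r"
    and scL :: "'k \<Rightarrow> 'l::ab_group_add \<Rightarrow> 'l"
    and brL :: "'l \<Rightarrow> 'l \<Rightarrow> 'l"
    and X :: "nat \<Rightarrow> nat \<Rightarrow> 'r \<Rightarrow> 'l" +
  fixes scQ :: "'k \<Rightarrow> 'q::ab_group_add \<Rightarrow> 'q"
    and bar :: "'r \<Rightarrow> 'q"
    and psi :: "'l \<Rightarrow> 'l \<Rightarrow> uidx \<Rightarrow> 'q"
  assumes Q_module: "module scQ"
    and psi_add_left: "psi (x + y) z = psi x z + psi y z"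
    and psi_add_right: "psi x (y + z) = psi x y + psi x z"
    and psi_scale_left: "psi (scL c x) y = uscale scQ c (psi x y)"
    and psi_scale_right: "psi x (scL c y) = uscale scQ c (psi x y)"
    and psi_row: "i \<in> ind3 \<Longrightarrow> j \<in> ind3 \<Longrightarrow> k \<in> ind3 \<Longrightarrow> i \<noteq> j \<Longrightarrow> j \<noteq> k \<Longrightarrow> i \<noteq> k \<Longrightarrow>
      psi (X i j a) (X i k b) = sign j k (uvec (upos i) (bar (a * b)))"
    and psi_col: "i \<in> ind3 \<Longrightarrow> j \<in> ind3 \<Longrightarrow> k \<in> ind3 \<Longrightarrow> i \<noteq> j \<Longrightarrow> j \<noteq> k \<Longrightarrow> i \<noteq> k \<Longrightarrow>
      psi (X i j a) (X k j b) = sign i k (uvec (uneg j) (bar (a * b)))"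
    and psi_other: "i \<in> ind3 \<Longrightarrow> j \<in> ind3 \<Longrightarrow> k \<in> ind3 \<Longrightarrow> l \<in> ind3 \<Longrightarrow> i \<noteq> j \<Longrightarrow> k \<noteq> l \<Longrightarrow>
      \<not> (i = k \<and> j \<noteq> l) \<Longrightarrow> \<not> (j = l \<and> i \<noteq> k) \<Longrightarrow> psi (X i j a) (X k l b) = 0"
    and psi_cocycle: "psi x (brL y z) = psi (brL x y) z - psi (brL x z) y"
begin

lemma X_add: "(i, j, a) \<in> stl_gens \<Longrightarrow> X i j (a + b) = X i j a + X i j b"
  using L.relation_holds[of "Gen (i, j, a + b)" "Add (Gen (i, j, a)) (Gen (i, j, b))"]
  by (simp add: stl_gens_def) (simp add: stl_rels_def)

lemma X_scale: "(i, j, a) \<in> stl_gens \<Longrightarrow> X i j (scR c a) = scL c (X i j a)"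
  using L.relation_holds[of "Gen (i, j, scR c a)" "Scl c (Gen (i, j, a))"]
  by (simp add: stl_gens_def) (simp add: stl_rels_def)

lemma X_bracket_chain:
  "i \<in> ind3 \<Longrightarrow> j \<in> ind3 \<Longrightarrow> k \<in> ind3 \<Longrightarrow> i \<noteq> j \<Longrightarrow> j \<noteq> k \<Longrightarrow> i \<noteq> k \<Longrightarrow>
   brL (X i j a) (X j k b) = X i k (a * b)"
  using L.relation_holds[of "Brk (Gen (i, j, a)) (Gen (j, k, b))" "Gen (i, k, a * b)"]
  by (simp add: stl_gens_def) (simp add: stl_rels_def)

lemma X_bracket_chain_rev:
  "i \<in> ind3 \<Longrightarrow> j \<in> ind3 \<Longrightarrow> k \<in> ind3 \<Longrightarrow> i \<noteq> j \<Longrightarrow> j \<noteq> k \<Longrightarrow> i \<noteq> k \<Longrightarrow>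
   brL (X i j a) (X k i b) = - X k j (b * a)"
  using L.relation_holds[of "Brk (Gen (i, j, a)) (Gen (k, i, b))" "Neg (Gen (k, j, b * a))"]
  by (simp add: stl_gens_def) (simp add: stl_rels_def)

lemma X_bracket_zero:
  "i \<in> ind3 \<Longrightarrow> j \<in> ind3 \<Longrightarrow> k \<in> ind3 \<Longrightarrow> l \<in> ind3 \<Longrightarrow> i \<noteq> j \<Longrightarrow> k \<noteq> l \<Longrightarrow>
   j \<noteq> k \<Longrightarrow> i \<noteq> l \<Longrightarrow> brL (X i j a) (X k l b) = 0"
  using L.relation_holds[of "Brk (Gen (i, j, a)) (Gen (k, l, b))" Zero]
  by (simp add: stl_gens_def) (simp add: stl_rels_def)

lemma psi_zero_left [simp]: "psi 0 y = 0"
  using psi_add_left[of 0 0 y] by simp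

lemma psi_zero_right [simp]: "psi x 0 = 0"
  using psi_add_right[of x 0 0] by simp

lemma uscale_zero [simp]: "uscale scQ c 0 = 0"
  by (simp add: uscale_def fun_eq_iff module.scale_zero_right[OF Q_module])

lemma leibniz_algebra_hat_stl: "leibniz_algebra (hat_sc scQ scL) (hat_br psi brL)"
  by (rule leibniz_algebra_hat[OF Q_module L.leibniz_algebra_axioms psi_add_left psi_add_right
        psi_scale_left psi_scale_right psi_cocycle])

definition hat_gen :: "('r, uidx \<Rightarrow> 'q) sgen \<Rightarrow> (uidx \<Rightarrow> 'q) \<times> 'l" where
  "hat_gen = case_sgen (\<lambda>i j a. (0, X i j a)) (\<lambda>u. (u, 0))"

lemma hat_gen_sharp_relation:
  assumes "(e, f) \<in> sharp_rels scR scQ bar"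
  shows "leval (hat_sc scQ scL) (hat_br psi brL) hat_gen e =
         leval (hat_sc scQ scL) (hat_br psi brL) hat_gen f"
  using assms unfolding sharp_rels_def
  by (elim UnE) (auto simp: hat_gen_def hat_sc_def hat_br_def stl_gens_def X_add X_scale
      X_bracket_chain X_bracket_chain_rev X_bracket_zero psi_row psi_col psi_other
      L.scale_zero_right zero_prod_def)

end

locale stl3 = stl3_sharp scR scQ bar scS brS gS + stl3_hat scR scL brL X scQ bar psi
  for scR :: "'k::comm_ring_1 \<Rightarrow> 'r::ring_1 \<Rightarrow> 'r"
    and scQ :: "'k \<Rightarrow> 'q::ab_group_add \<Rightarrow> 'q"
    and bar :: "'r \<Rightarrow> 'q"
    and scS :: "'k \<Rightarrow> 's::ab_group_add \<Rightarrow> 's"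
    and brS :: "'s \<Rightarrow> 's \<Rightarrow> 's"
    and gS :: "('r, uidx \<Rightarrow> 'q) sgen \<Rightarrow> 's"
    and scL :: "'k \<Rightarrow> 'l::ab_group_add \<Rightarrow> 'l"
    and brL :: "'l \<Rightarrow> 'l \<Rightarrow> 'l"
    and X :: "nat \<Rightarrow> nat \<Rightarrow> 'r \<Rightarrow> 'l"
    and psi :: "'l \<Rightarrow> 'l \<Rightarrow> uidx \<Rightarrow> 'q"
begin

definition canonical_hom :: "('s \<Rightarrow> (uidx \<Rightarrow> 'q) \<times> 'l) \<Rightarrow> bool" where
  "canonical_hom \<rho> \<longleftrightarrow> leibniz_hom scS brS (hat_sc scQ scL) (hat_br psi brL) \<rho>
     \<and> (\<forall>i j a. i \<in> ind3 \<and> j \<in> ind3 \<and> i \<noteq> j \<longrightarrow> \<rho> (gS (SX i j a)) = (0, X i j a))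
     \<and> (\<forall>u. \<rho> (gS (SU u)) = (u, 0))"

lemma canonical_hom_iff_hat_gen:
  "canonical_hom \<rho> \<longleftrightarrow> leibniz_hom scS brS (hat_sc scQ scL) (hat_br psi brL) \<rho>
     \<and> (\<forall>x\<in>sharp_gens. \<rho> (gS x) = hat_gen x)"
  by (auto simp: canonical_hom_def sharp_gens_def hat_gen_def)

lemma ex1_canonical_hom: "\<exists>!\<rho>. canonical_hom \<rho>"
proof -
  obtain \<rho> where "leibniz_hom scS brS (hat_sc scQ scL) (hat_br psi brL) \<rho>"
    "\<forall>x\<in>sharp_gens. \<rho> (gS x) = hat_gen x"
    using S.hom_lift[OF leibniz_algebra_hat_stl hat_gen_sharp_relation] by blast
  moreover have "\<rho>' = \<rho>''" if "canonical_hom \<rho>'" "canonical_hom \<rho>''" for \<rho>' \<rho>''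
    using that S.hom_eqI[OF leibniz_algebra_hat_stl] by (simp add: canonical_hom_iff_hat_gen)
  ultimately show ?thesis
    unfolding canonical_hom_iff_hat_gen by blast
qed

lemma canonical_hom_module_hom: "canonical_hom \<rho> \<Longrightarrow> module_hom scS (hat_sc scQ scL) \<rho>"
  unfolding canonical_hom_def
  using leibniz_hom_module_hom[OF S.leibniz_algebra_axioms leibniz_algebra_hat_stl] by blast

lemma canonical_hom_sharp_eval:
  assumes \<rho>: "canonical_hom \<rho>" and "gens e \<subseteq> stl_gens"
  shows "snd (\<rho> (sharp_eval e)) = leval scL brL (\<lambda>(i, j, a). X i j a) e"
proof -
  interpret \<rho>: module_hom scS "hat_sc scQ scL" \<rho>
    by (rule canonical_hom_module_hom[OF \<rho>])
  from \<open>gens e \<subseteq> stl_gens\<close> show ?thesis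
    unfolding sharp_eval_def
  proof (induction e)
    case (Gen x)
    then show ?case
      using \<rho> by (cases x) (simp add: canonical_hom_def stl_gens_def)
  qed (use \<rho> in \<open>simp_all add: canonical_hom_def leibniz_hom_def \<rho>.neg hat_sc_def hat_br_def\<close>)
qed

lemma canonical_hom_inj:
  assumes \<rho>: "canonical_hom \<rho>"
  shows "inj \<rho>"
proof -
  interpret \<rho>: module_hom scS "hat_sc scQ scL" \<rho>
    by (rule canonical_hom_module_hom[OF \<rho>])
  have "s = 0" if "\<rho> s = 0" for s
  proof -
    obtain e u where e: "gens e \<subseteq> stl_gens" and "s - sharp_eval e = sU u"
      using sharp_eval_onto_mod_sU by blast
    then have s: "s = sharp_eval e + sU u"
      by (simp add: algebra_simps)
    then have "\<rho> s = \<rho> (sharp_eval e) + (u, 0)"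
      using \<rho> by (simp add: canonical_hom_def \<rho>.add)
    then have "leval scL brL (\<lambda>(i, j, a). X i j a) e = leval scL brL (\<lambda>(i, j, a). X i j a) Zero"
      using \<open>\<rho> s = 0\<close> canonical_hom_sharp_eval[OF \<rho> e] by (simp add: prod_eq_iff)
    then have "lder (stl_rels scR) e Zero"
      using L.leval_eq_iff_lder[of e Zero] e by simp
    then have "sharp_eval e - sharp_eval Zero \<in> range sU"
      by (rule sharp_eval_lder)
    then have "sharp_eval e \<in> range sU"
      by (simp add: sharp_eval_def)
    then obtain w where "sharp_eval e = sU w"
      by blast
    then have "s = sU (w + u)"
      by (simp add: s sU_add)
    moreover have "w + u = 0"
      using \<rho> \<open>\<rho> s = 0\<close> calculation by (simp add: canonical_hom_def zero_prod_def)
    ultimately show "s = 0"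
      using sU_zero by simp
  qed
  then show ?thesis
    using \<rho>.inj_iff_eq_0 by blast
qed

lemma canonical_hom_surj:
  assumes \<rho>: "canonical_hom \<rho>"
  shows "surj \<rho>"
proof -
  interpret \<rho>: module_hom scS "hat_sc scQ scL" \<rho>
    by (rule canonical_hom_module_hom[OF \<rho>])
  have "(u, x) \<in> range \<rho>" for u x
  proof -
    obtain e where e: "gens e \<subseteq> stl_gens" "leval scL brL (\<lambda>(i, j, a). X i j a) e = x"
      using L.generated by blast
    let ?s = "sharp_eval e + sU (u - fst (\<rho> (sharp_eval e)))"
    have "\<rho> ?s = (u, x)"
      using \<rho> canonical_hom_sharp_eval[OF \<rho> e(1)] e(2) by (simp add: canonical_hom_def \<rho>.add prod_eq_iff)
    then show ?thesis
      by (metis rangeI)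
  qed
  then show ?thesis
    by (simp add: surj_def) (metis rangeE)
qed

lemma canonical_hom_bij: "canonical_hom \<rho> \<Longrightarrow> bij \<rho>"
  by (simp add: bij_def canonical_hom_inj canonical_hom_surj)

end

theorem lemma4p3:
  fixes scR :: "'k::comm_ring_1 \<Rightarrow> 'r::ring_1 \<Rightarrow> 'r"
    and scQ :: "'k \<Rightarrow> 'q::ab_group_add \<Rightarrow> 'q"
    and bar :: "'r \<Rightarrow> 'q"
    and scL :: "'k \<Rightarrow> 'l::ab_group_add \<Rightarrow> 'l"
    and brL :: "'l \<Rightarrow> 'l \<Rightarrow> 'l"
    and X :: "nat \<Rightarrow> nat \<Rightarrow> 'r \<Rightarrow> 'l"
    and psi :: "'l \<Rightarrow> 'l \<Rightarrow> uidx \<Rightarrow> 'q"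
    and scS :: "'k \<Rightarrow> 's::ab_group_add \<Rightarrow> 's"
    and brS :: "'s \<Rightarrow> 's \<Rightarrow> 's"
    and gS :: "('r, uidx \<Rightarrow> 'q) sgen \<Rightarrow> 's"
  assumes R_module: "module scR"
    and R_algebra: "\<forall>c a b. scR c (a * b) = scR c a * b \<and> scR c (a * b) = a * scR c b"
    and R_free: "\<exists>B. 1 \<in> B \<and> \<not> module.dependent scR B \<and> module.span scR B = UNIV"
    (* R_3 = R/(3R + R[R,R]) as a K-module, with quotient map bar *)
    and Q_module: "module scQ"
    and bar_add: "\<forall>a b. bar (a + b) = bar a + bar b"
    and bar_scale: "\<forall>c a. bar (scR c a) = scQ c (bar a)"
    and bar_surj: "surj bar"
    and bar_kernel: "\<forall>a. bar a = 0 \<longleftrightarrow> a \<in> I3 scR"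
    (* stl_3(R) *)
    and stl: "presents scL brL (\<lambda>(i, j, a). X i j a) stl_gens (stl_rels scR)"
    (* the cocycle psi *)
    and psi_add_l: "\<forall>x y z. psi (x + y) z = psi x z + psi y z"
    and psi_add_r: "\<forall>x y z. psi x (y + z) = psi x y + psi x z"
    and psi_scl_l: "\<forall>c x y. psi (scL c x) y = uscale scQ c (psi x y)"
    and psi_scl_r: "\<forall>c x y. psi x (scL c y) = uscale scQ c (psi x y)"
    and psi_row: "\<forall>i j k a b. i \<in> ind3 \<and> j \<in> ind3 \<and> k \<in> ind3 \<and> i \<noteq> j \<and> j \<noteq> k \<and> i \<noteq> k \<longrightarrow>
        psi (X i j a) (X i k b) = sign j k (uvec (upos i) (bar (a * b)))"
    and psi_col: "\<forall>i j k a b. i \<in> ind3 \<and> j \<in> ind3 \<and> k \<in> ind3 \<and> i \<noteq> j \<and> j \<noteq> k \<and> i \<noteq> k \<longrightarrow>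
        psi (X i j a) (X k j b) = sign i k (uvec (uneg j) (bar (a * b)))"
    and psi_other: "\<forall>i j k l a b. i \<in> ind3 \<and> j \<in> ind3 \<and> k \<in> ind3 \<and> l \<in> ind3 \<and> i \<noteq> j \<and> k \<noteq> l
        \<and> \<not> (i = k \<and> j \<noteq> l) \<and> \<not> (j = l \<and> i \<noteq> k) \<longrightarrow> psi (X i j a) (X k l b) = 0"
    and psi_H: "\<forall>h \<in> module.span scL {brL (X i j a) (X j i b) | i j a b. i \<in> ind3 \<and> j \<in> ind3 \<and> i \<noteq> j}.
        \<forall>x. psi h x = 0 \<and> psi x h = 0"
    and psi_cocycle: "\<forall>x y z. psi x (brL y z) = psi (brL x y) z - psi (brL x z) y"
    (* stl_3(R)^sharp *)
    and sharp: "presents scS brS gS sharp_gens (sharp_rels scR scQ bar)"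
  shows "(\<exists>!\<rho>. leibniz_hom scS brS (hat_sc scQ scL) (hat_br psi brL) \<rho>
            \<and> (\<forall>i j a. i \<in> ind3 \<and> j \<in> ind3 \<and> i \<noteq> j \<longrightarrow> \<rho> (gS (SX i j a)) = (0, X i j a))
            \<and> (\<forall>u. \<rho> (gS (SU u)) = (u, 0)))
       \<and> (\<forall>\<rho>. leibniz_hom scS brS (hat_sc scQ scL) (hat_br psi brL) \<rho>
            \<and> (\<forall>i j a. i \<in> ind3 \<and> j \<in> ind3 \<and> i \<noteq> j \<longrightarrow> \<rho> (gS (SX i j a)) = (0, X i j a))
            \<and> (\<forall>u. \<rho> (gS (SU u)) = (u, 0))
          \<longrightarrow> bij \<rho>)"
proof -
  have "stl3_sharp scR scQ bar scS brS gS"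
    using sharp bar_surj
    by (simp add: stl3_sharp_def stl3_sharp_axioms_def presents_iff_presentation)
  moreover have "stl3_hat scR scL brL X scQ bar psi"
    using stl Q_module psi_add_l psi_add_r psi_scl_l psi_scl_r psi_row psi_col psi_other psi_cocycle
    by (simp add: stl3_hat_def stl3_hat_axioms_def presents_iff_presentation)
  ultimately interpret stl3 scR scQ bar scS brS gS scL brL X psi
    by (intro stl3.intro)
  show ?thesis
    using ex1_canonical_hom canonical_hom_bij unfolding canonical_hom_def by blast
qed

end
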